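(* Let $M$ be a Rickart right $R$-module. If $M$ is reduced, or rigid, or abelian, or semicommutative, or symmetric, then $M$ is a centrally endo-AIP module.
   Context: Let $S=\mathrm{End}_R(M)$. $M$ is Rickart if $\ker\phi$ is a direct summand of $M$ for every $\phi\in S$. $M$ is reduced if for $\phi\in S$, $m\in M$, $\phi^2(m)=0$ implies $\phi(Sm)=0$ (equivalently $\phi(m)=0$ implies $\mathrm{Im}(\phi)\cap Sm=0$). $M$ is rigid if $\psi^2(m)=0$ implies $\psi(m)=0$ for all $\psi\in S$, $m\in M$. $M$ is abelian if every idempotent of $S$ is central. $M$ is semicommutative if $\psi(m)=0$ implies $\psi(Sm)=0$. $M$ is symmetric if $\phi\psi(m)=0$ implies $\psi\phi(m)=0$ for all $\phi,\psi\in S$, $m\in M$. For $N\le M$, $l_S(N)=\{\phi\in S:\phi(N)=0\}$. An ideal $I$ of $S$ is centrally s-unital if for every $a\in I$ there is $z\in I$ central in $S$ with $az=a$. $M$ is centrally endo-AIP if $l_S(N)$ is a centrally s-unital ideal of $S$ for every fully invariant submodule $N$ of $M$. *)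

theory Defs
  imports "HOL-Algebra.Ring" "HOL-Algebra.Ideal"
begin

text \<open>A right R-module: an abelian group M (only its additive structure is used)
  together with a right action act m r of the ring R.\<close>

definition right_module ::
  "('a, 'b) ring_scheme \<Rightarrow> ('c, 'd) ring_scheme \<Rightarrow> ('c \<Rightarrow> 'a \<Rightarrow> 'c) \<Rightarrow> bool" where
  "right_module R M act \<longleftrightarrow> ring R \<and> abelian_group M \<and>
     (\<forall>m\<in>carrier M. \<forall>r\<in>carrier R. act m r \<in> carrier M) \<and>
     (\<forall>m\<in>carrier M. \<forall>n\<in>carrier M. \<forall>r\<in>carrier R.
        act (m \<oplus>\<^bsub>M\<^esub> n) r = act m r \<oplus>\<^bsub>M\<^esub> act n r) \<and>
     (\<forall>m\<in>carrier M. \<forall>r\<in>carrier R. \<forall>s\<in>carrier R.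
        act m (r \<oplus>\<^bsub>R\<^esub> s) = act m r \<oplus>\<^bsub>M\<^esub> act m s) \<and>
     (\<forall>m\<in>carrier M. \<forall>r\<in>carrier R. \<forall>s\<in>carrier R.
        act m (r \<otimes>\<^bsub>R\<^esub> s) = act (act m r) s) \<and>
     (\<forall>m\<in>carrier M. act m \<one>\<^bsub>R\<^esub> = m)"

definition endos ::
  "('a, 'b) ring_scheme \<Rightarrow> ('c, 'd) ring_scheme \<Rightarrow> ('c \<Rightarrow> 'a \<Rightarrow> 'c) \<Rightarrow> ('c \<Rightarrow> 'c) set" where
  "endos R M act = {f. f \<in> carrier M \<rightarrow>\<^sub>E carrier M \<and>
     (\<forall>m\<in>carrier M. \<forall>n\<in>carrier M. f (m \<oplus>\<^bsub>M\<^esub> n) = f m \<oplus>\<^bsub>M\<^esub> f n) \<and>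
     (\<forall>m\<in>carrier M. \<forall>r\<in>carrier R. f (act m r) = act (f m) r)}"

text \<open>The endomorphism ring S = End_R(M), multiplication is composition
  (f \<otimes> g = f \<circ> g, endomorphisms act on the left).\<close>

definition End_ring ::
  "('a, 'b) ring_scheme \<Rightarrow> ('c, 'd) ring_scheme \<Rightarrow> ('c \<Rightarrow> 'a \<Rightarrow> 'c) \<Rightarrow> ('c \<Rightarrow> 'c) ring" where
  "End_ring R M act = \<lparr> carrier = endos R M act,
      monoid.mult = (\<lambda>f g. compose (carrier M) f g),
      one = (\<lambda>x\<in>carrier M. x),
      zero = (\<lambda>x\<in>carrier M. \<zero>\<^bsub>M\<^esub>),
      add = (\<lambda>f g. \<lambda>x\<in>carrier M. f x \<oplus>\<^bsub>M\<^esub> g x) \<rparr>"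

definition submod ::
  "('a, 'b) ring_scheme \<Rightarrow> ('c, 'd) ring_scheme \<Rightarrow> ('c \<Rightarrow> 'a \<Rightarrow> 'c) \<Rightarrow> 'c set \<Rightarrow> bool" where
  "submod R M act N \<longleftrightarrow> N \<subseteq> carrier M \<and> \<zero>\<^bsub>M\<^esub> \<in> N \<and>
     (\<forall>m\<in>N. \<forall>n\<in>N. m \<oplus>\<^bsub>M\<^esub> n \<in> N) \<and> (\<forall>m\<in>N. \<ominus>\<^bsub>M\<^esub> m \<in> N) \<and>
     (\<forall>m\<in>N. \<forall>r\<in>carrier R. act m r \<in> N)"

definition direct_summand ::
  "('a, 'b) ring_scheme \<Rightarrow> ('c, 'd) ring_scheme \<Rightarrow> ('c \<Rightarrow> 'a \<Rightarrow> 'c) \<Rightarrow> 'c set \<Rightarrow> bool" where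
  "direct_summand R M act K \<longleftrightarrow> submod R M act K \<and>
     (\<exists>N. submod R M act N \<and> K \<inter> N = {\<zero>\<^bsub>M\<^esub>} \<and>
          (\<forall>m\<in>carrier M. \<exists>a\<in>K. \<exists>b\<in>N. m = a \<oplus>\<^bsub>M\<^esub> b))"

definition ker_endo :: "('c, 'd) ring_scheme \<Rightarrow> ('c \<Rightarrow> 'c) \<Rightarrow> 'c set" where
  "ker_endo M f = {m \<in> carrier M. f m = \<zero>\<^bsub>M\<^esub>}"

definition rickart_mod where
  "rickart_mod R M act \<longleftrightarrow> (\<forall>\<phi>\<in>endos R M act. direct_summand R M act (ker_endo M \<phi>))"

definition reduced_mod where
  "reduced_mod R M act \<longleftrightarrow> (\<forall>\<phi>\<in>endos R M act. \<forall>m\<in>carrier M.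
     \<phi> (\<phi> m) = \<zero>\<^bsub>M\<^esub> \<longrightarrow> (\<forall>\<psi>\<in>endos R M act. \<phi> (\<psi> m) = \<zero>\<^bsub>M\<^esub>))"

definition rigid_mod where
  "rigid_mod R M act \<longleftrightarrow> (\<forall>\<psi>\<in>endos R M act. \<forall>m\<in>carrier M.
     \<psi> (\<psi> m) = \<zero>\<^bsub>M\<^esub> \<longrightarrow> \<psi> m = \<zero>\<^bsub>M\<^esub>)"

definition abelian_mod where
  "abelian_mod R M act \<longleftrightarrow> (\<forall>e\<in>carrier (End_ring R M act).
     e \<otimes>\<^bsub>End_ring R M act\<^esub> e = e \<longrightarrow>
     (\<forall>f\<in>carrier (End_ring R M act).
        e \<otimes>\<^bsub>End_ring R M act\<^esub> f = f \<otimes>\<^bsub>End_ring R M act\<^esub> e))"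

definition semicommutative_mod where
  "semicommutative_mod R M act \<longleftrightarrow> (\<forall>\<psi>\<in>endos R M act. \<forall>m\<in>carrier M.
     \<psi> m = \<zero>\<^bsub>M\<^esub> \<longrightarrow> (\<forall>\<phi>\<in>endos R M act. \<psi> (\<phi> m) = \<zero>\<^bsub>M\<^esub>))"

definition symmetric_mod where
  "symmetric_mod R M act \<longleftrightarrow> (\<forall>\<phi>\<in>endos R M act. \<forall>\<psi>\<in>endos R M act. \<forall>m\<in>carrier M.
     \<phi> (\<psi> m) = \<zero>\<^bsub>M\<^esub> \<longrightarrow> \<psi> (\<phi> m) = \<zero>\<^bsub>M\<^esub>)"

definition fully_invariant where
  "fully_invariant R M act N \<longleftrightarrow> submod R M act N \<and> (\<forall>\<phi>\<in>endos R M act. \<phi> ` N \<subseteq> N)"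

definition left_annihilator where
  "left_annihilator R M act N = {\<phi> \<in> endos R M act. \<forall>n\<in>N. \<phi> n = \<zero>\<^bsub>M\<^esub>}"

definition centrally_s_unital :: "('e, 'f) ring_scheme \<Rightarrow> 'e set \<Rightarrow> bool" where
  "centrally_s_unital S I \<longleftrightarrow> ideal I S \<and>
     (\<forall>a\<in>I. \<exists>z\<in>I. (\<forall>s\<in>carrier S. z \<otimes>\<^bsub>S\<^esub> s = s \<otimes>\<^bsub>S\<^esub> z) \<and> a \<otimes>\<^bsub>S\<^esub> z = a)"

definition centrally_endo_AIP where
  "centrally_endo_AIP R M act \<longleftrightarrow> (\<forall>N. fully_invariant R M act N \<longrightarrow>
     centrally_s_unital (End_ring R M act) (left_annihilator R M act N))"

end

theory Submission imports Defs begin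

(* Each of the five hypotheses makes S = End(M) an abelian ring. A reduced module is rigid
   (take the identity for the second endomorphism), and rigidity says S has no nonzero
   square-zero elements; such rings are reversible, symmetry of M says directly that S is
   reversible, and reversible rings are semicommutative, as S is for a semicommutative M.
   In a semicommutative ring an idempotent e satisfies e f (1 - e) = 0 = (1 - e) f e, so
   e f = e f e = f e and e is central.
   Now let a annihilate a fully invariant N. By the Rickart property M = ker a + N' is a
   direct sum, and the projection z onto N' along ker a is an idempotent with a z = a that
   vanishes on ker a, which contains N. So z lies in the annihilator of N, and since S is
   abelian it is central. *)

definition reduced_ring :: "('a, 'b) ring_scheme \<Rightarrow> bool" where
  "reduced_ring S \<longleftrightarrow> (\<forall>x\<in>carrier S. x \<otimes>\<^bsub>S\<^esub> x = \<zero>\<^bsub>S\<^esub> \<longrightarrow> x = \<zero>\<^bsub>S\<^esub>)"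

definition reversible_ring :: "('a, 'b) ring_scheme \<Rightarrow> bool" where
  "reversible_ring S \<longleftrightarrow>
     (\<forall>a\<in>carrier S. \<forall>b\<in>carrier S. a \<otimes>\<^bsub>S\<^esub> b = \<zero>\<^bsub>S\<^esub> \<longrightarrow> b \<otimes>\<^bsub>S\<^esub> a = \<zero>\<^bsub>S\<^esub>)"

definition semicommutative_ring :: "('a, 'b) ring_scheme \<Rightarrow> bool" where
  "semicommutative_ring S \<longleftrightarrow> (\<forall>a\<in>carrier S. \<forall>b\<in>carrier S. a \<otimes>\<^bsub>S\<^esub> b = \<zero>\<^bsub>S\<^esub> \<longrightarrow>
     (\<forall>f\<in>carrier S. a \<otimes>\<^bsub>S\<^esub> f \<otimes>\<^bsub>S\<^esub> b = \<zero>\<^bsub>S\<^esub>))"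

definition abelian_ring :: "('a, 'b) ring_scheme \<Rightarrow> bool" where
  "abelian_ring S \<longleftrightarrow> (\<forall>e\<in>carrier S. e \<otimes>\<^bsub>S\<^esub> e = e \<longrightarrow>
     (\<forall>f\<in>carrier S. e \<otimes>\<^bsub>S\<^esub> f = f \<otimes>\<^bsub>S\<^esub> e))"

context ring
begin

lemma reduced_ring_imp_reversible:
  assumes "reduced_ring R" shows "reversible_ring R"
  unfolding reversible_ring_def
proof (intro ballI impI)
  fix a b assume a: "a \<in> carrier R" and b: "b \<in> carrier R" and ab: "a \<otimes> b = \<zero>"
  have "(b \<otimes> a) \<otimes> (b \<otimes> a) = b \<otimes> (a \<otimes> b) \<otimes> a"
    using a b by (simp add: m_assoc)
  also have "\<dots> = \<zero>" using a b ab by simp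
  finally show "b \<otimes> a = \<zero>"
    using assms a b unfolding reduced_ring_def by (meson m_closed)
qed

lemma reversible_ring_imp_semicommutative:
  assumes "reversible_ring R" shows "semicommutative_ring R"
  unfolding semicommutative_ring_def
proof (intro ballI impI)
  fix a b f assume a: "a \<in> carrier R" and b: "b \<in> carrier R" and f: "f \<in> carrier R"
    and ab: "a \<otimes> b = \<zero>"
  have "b \<otimes> a = \<zero>" using assms a b ab unfolding reversible_ring_def by blast
  then have "b \<otimes> (a \<otimes> f) = \<zero>" using a b f by (simp flip: m_assoc)
  then show "a \<otimes> f \<otimes> b = \<zero>" using assms a b f unfolding reversible_ring_def by blast
qed

lemma semicommutative_ring_imp_abelian:
  assumes "semicommutative_ring R" shows "abelian_ring R"
  unfolding abelian_ring_def
proof (intro ballI impI)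
  fix e f assume e: "e \<in> carrier R" and ee: "e \<otimes> e = e" and f: "f \<in> carrier R"
  have e': "\<one> \<ominus> e \<in> carrier R" using e by simp
  have split_one: "e \<oplus> (\<one> \<ominus> e) = \<one>"
    using e by (metis minus_eq a_comm a_inv_closed one_closed r_neg2)
  have sc: "\<And>a b. a \<in> carrier R \<Longrightarrow> b \<in> carrier R \<Longrightarrow> a \<otimes> b = \<zero> \<Longrightarrow> a \<otimes> f \<otimes> b = \<zero>"
    using assms f unfolding semicommutative_ring_def by blast
  have "e \<otimes> (\<one> \<ominus> e) = \<zero>" "(\<one> \<ominus> e) \<otimes> e = \<zero>"
    using e ee by (simp_all add: minus_eq r_distr l_distr r_minus l_minus r_neg)
  then have corners: "e \<otimes> f \<otimes> (\<one> \<ominus> e) = \<zero>" "(\<one> \<ominus> e) \<otimes> f \<otimes> e = \<zero>"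
    using sc e e' by auto
  have "e \<otimes> f = e \<otimes> f \<otimes> (e \<oplus> (\<one> \<ominus> e))" using e f by (simp add: split_one)
  also have "\<dots> = e \<otimes> f \<otimes> e" using e e' f corners by (simp add: r_distr)
  also have "\<dots> = (e \<oplus> (\<one> \<ominus> e)) \<otimes> f \<otimes> e" using e e' f corners by (simp add: l_distr)
  also have "\<dots> = f \<otimes> e" using e f by (simp add: split_one)
  finally show "e \<otimes> f = f \<otimes> e" .
qed

end

lemma abelian_mod_iff_abelian_ring: "abelian_mod R M act \<longleftrightarrow> abelian_ring (End_ring R M act)"
  unfolding abelian_mod_def abelian_ring_def ..

locale right_mod =
  fixes R :: "('a, 'b) ring_scheme" and M :: "('c, 'd) ring_scheme" and act :: "'c \<Rightarrow> 'a \<Rightarrow> 'c"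
  assumes right_module: "right_module R M act"
begin

sublocale M: abelian_group M
  using right_module unfolding right_module_def by blast

lemma act_closed: "m \<in> carrier M \<Longrightarrow> r \<in> carrier R \<Longrightarrow> act m r \<in> carrier M"
  using right_module unfolding right_module_def by blast

lemma act_add:
  "m \<in> carrier M \<Longrightarrow> n \<in> carrier M \<Longrightarrow> r \<in> carrier R \<Longrightarrow>
   act (m \<oplus>\<^bsub>M\<^esub> n) r = act m r \<oplus>\<^bsub>M\<^esub> act n r"
  using right_module unfolding right_module_def by blast

lemma additive_map_hom:
  assumes "\<And>m. m \<in> carrier M \<Longrightarrow> f m \<in> carrier M"
    and "\<And>m n. m \<in> carrier M \<Longrightarrow> n \<in> carrier M \<Longrightarrow> f (m \<oplus>\<^bsub>M\<^esub> n) = f m \<oplus>\<^bsub>M\<^esub> f n"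
  shows "abelian_group_hom M M f"
  by (intro abelian_group_homI M.abelian_group_axioms group_hom.intro group_hom_axioms.intro
      M.a_group homI) (simp_all add: assms)

lemma act_hom: "r \<in> carrier R \<Longrightarrow> abelian_group_hom M M (\<lambda>m. act m r)"
  by (rule additive_map_hom) (simp_all add: act_closed act_add)

lemma endo_closed: "f \<in> endos R M act \<Longrightarrow> m \<in> carrier M \<Longrightarrow> f m \<in> carrier M"
  unfolding endos_def by auto

lemma endo_add:
  "f \<in> endos R M act \<Longrightarrow> m \<in> carrier M \<Longrightarrow> n \<in> carrier M \<Longrightarrow>
   f (m \<oplus>\<^bsub>M\<^esub> n) = f m \<oplus>\<^bsub>M\<^esub> f n"
  unfolding endos_def by auto

lemma endo_act:
  "f \<in> endos R M act \<Longrightarrow> m \<in> carrier M \<Longrightarrow> r \<in> carrier R \<Longrightarrow> f (act m r) = act (f m) r"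
  unfolding endos_def by auto

lemma endo_hom: "f \<in> endos R M act \<Longrightarrow> abelian_group_hom M M f"
  by (rule additive_map_hom) (simp_all add: endo_closed endo_add)

lemma endo_eqI:
  "f \<in> endos R M act \<Longrightarrow> g \<in> endos R M act \<Longrightarrow> (\<And>m. m \<in> carrier M \<Longrightarrow> f m = g m) \<Longrightarrow> f = g"
  using PiE_ext[of f "carrier M" "\<lambda>_. carrier M" g] unfolding endos_def by blast

lemma endosI:
  assumes "\<And>m. m \<in> carrier M \<Longrightarrow> f m \<in> carrier M" and "f \<in> extensional (carrier M)"
    and "\<And>m n. m \<in> carrier M \<Longrightarrow> n \<in> carrier M \<Longrightarrow> f (m \<oplus>\<^bsub>M\<^esub> n) = f m \<oplus>\<^bsub>M\<^esub> f n"
    and "\<And>m r. m \<in> carrier M \<Longrightarrow> r \<in> carrier R \<Longrightarrow> f (act m r) = act (f m) r"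
  shows "f \<in> endos R M act"
  using assms unfolding endos_def by (simp add: PiE_iff)

abbreviation S where "S \<equiv> End_ring R M act"

lemma End_ring_simps:
  "carrier S = endos R M act"
  "f \<otimes>\<^bsub>S\<^esub> g = compose (carrier M) f g"
  "\<one>\<^bsub>S\<^esub> = (\<lambda>m\<in>carrier M. m)"
  "\<zero>\<^bsub>S\<^esub> = (\<lambda>m\<in>carrier M. \<zero>\<^bsub>M\<^esub>)"
  "f \<oplus>\<^bsub>S\<^esub> g = (\<lambda>m\<in>carrier M. f m \<oplus>\<^bsub>M\<^esub> g m)"
  by (simp_all add: End_ring_def)

lemma ring_End_ring: "ring S"
proof -
  have add: "(\<lambda>m\<in>carrier M. f m \<oplus>\<^bsub>M\<^esub> g m) \<in> endos R M act"
    if "f \<in> endos R M act" "g \<in> endos R M act" for f g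
    using that by (intro endosI) (simp_all add: endo_closed endo_add endo_act act_closed act_add M.a_ac)
  have neg: "(\<lambda>m\<in>carrier M. \<ominus>\<^bsub>M\<^esub> f m) \<in> endos R M act" if "f \<in> endos R M act" for f
    using that abelian_group_hom.hom_a_inv[OF act_hom]
    by (intro endosI) (simp_all add: endo_closed endo_add endo_act act_closed M.minus_add)
  have zero: "(\<lambda>m\<in>carrier M. \<zero>\<^bsub>M\<^esub>) \<in> endos R M act"
    using abelian_group_hom.hom_zero[OF act_hom] by (intro endosI) (simp_all add: act_closed)
  have one: "(\<lambda>m\<in>carrier M. m) \<in> endos R M act"
    by (intro endosI) (simp_all add: act_closed)
  have comp: "compose (carrier M) f g \<in> endos R M act"
    if "f \<in> endos R M act" "g \<in> endos R M act" for f g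
    using that by (intro endosI) (simp_all add: compose_def endo_closed endo_add endo_act act_closed)
  have undef: "f m = undefined" if "f \<in> endos R M act" "m \<notin> carrier M" for f m
    using that unfolding endos_def by auto
  show ?thesis
  proof (rule ringI)
    show "abelian_group S"
    proof (rule abelian_groupI)
      fix f assume f: "f \<in> carrier S"
      show "\<exists>g\<in>carrier S. g \<oplus>\<^bsub>S\<^esub> f = \<zero>\<^bsub>S\<^esub>"
        using f neg by (intro bexI[of _ "\<lambda>m\<in>carrier M. \<ominus>\<^bsub>M\<^esub> f m"])
          (auto simp: End_ring_simps endo_closed M.l_neg)
    qed (auto simp: End_ring_simps add zero endo_closed M.a_ac fun_eq_iff undef)
  next
    show "monoid S"
      by (rule monoidI)
        (auto simp: End_ring_simps one comp; auto simp: fun_eq_iff compose_def undef endo_closed)+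
  qed (auto simp: End_ring_simps add comp;
       auto simp: fun_eq_iff compose_def undef endo_closed endo_add)+
qed

sublocale S: ring S
  by (rule ring_End_ring)

lemma End_ring_mult_apply: "m \<in> carrier M \<Longrightarrow> (f \<otimes>\<^bsub>S\<^esub> g) m = f (g m)"
  by (simp add: End_ring_simps compose_def)

lemma End_ring_eqI:
  "f \<in> carrier S \<Longrightarrow> g \<in> carrier S \<Longrightarrow> (\<And>m. m \<in> carrier M \<Longrightarrow> f m = g m) \<Longrightarrow> f = g"
  unfolding End_ring_simps(1) by (rule endo_eqI)

lemma End_ring_apply_zero: "f \<in> carrier S \<Longrightarrow> f \<zero>\<^bsub>M\<^esub> = \<zero>\<^bsub>M\<^esub>"
  unfolding End_ring_simps(1) by (rule abelian_group_hom.hom_zero[OF endo_hom])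

lemma End_ring_eq_zero_iff: "f \<in> carrier S \<Longrightarrow> f = \<zero>\<^bsub>S\<^esub> \<longleftrightarrow> (\<forall>m\<in>carrier M. f m = \<zero>\<^bsub>M\<^esub>)"
  using S.zero_closed by (auto simp: End_ring_simps(4) intro: End_ring_eqI)

lemma End_ring_mult_eq_zero_iff:
  "f \<in> carrier S \<Longrightarrow> g \<in> carrier S \<Longrightarrow>
   f \<otimes>\<^bsub>S\<^esub> g = \<zero>\<^bsub>S\<^esub> \<longleftrightarrow> (\<forall>m\<in>carrier M. f (g m) = \<zero>\<^bsub>M\<^esub>)"
  by (simp add: End_ring_eq_zero_iff End_ring_mult_apply)

lemma reduced_mod_imp_rigid_mod:
  assumes "reduced_mod R M act" shows "rigid_mod R M act"
  unfolding rigid_mod_def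
proof (intro ballI impI)
  fix \<psi> m assume "\<psi> \<in> endos R M act" and m: "m \<in> carrier M" and "\<psi> (\<psi> m) = \<zero>\<^bsub>M\<^esub>"
  then have "\<psi> (\<one>\<^bsub>S\<^esub> m) = \<zero>\<^bsub>M\<^esub>"
    using assms S.one_closed unfolding reduced_mod_def End_ring_simps(1) by blast
  then show "\<psi> m = \<zero>\<^bsub>M\<^esub>" using m by (simp add: End_ring_simps)
qed

lemma rigid_mod_imp_reduced_ring:
  assumes "rigid_mod R M act" shows "reduced_ring S"
  using assms unfolding reduced_ring_def rigid_mod_def
  by (simp add: End_ring_mult_eq_zero_iff End_ring_eq_zero_iff End_ring_simps(1))

lemma semicommutative_mod_imp_semicommutative_ring:
  assumes "semicommutative_mod R M act" shows "semicommutative_ring S"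
  unfolding semicommutative_ring_def
proof (intro ballI impI)
  fix a b f assume a: "a \<in> carrier S" and b: "b \<in> carrier S" and f: "f \<in> carrier S"
    and "a \<otimes>\<^bsub>S\<^esub> b = \<zero>\<^bsub>S\<^esub>"
  then have "\<forall>m\<in>carrier M. a (b m) = \<zero>\<^bsub>M\<^esub>" by (simp add: End_ring_mult_eq_zero_iff)
  then have "\<forall>m\<in>carrier M. a (f (b m)) = \<zero>\<^bsub>M\<^esub>"
    using assms a b f endo_closed unfolding semicommutative_mod_def End_ring_simps(1) by blast
  moreover have "a \<otimes>\<^bsub>S\<^esub> f \<in> carrier S" using a f by simp
  ultimately show "a \<otimes>\<^bsub>S\<^esub> f \<otimes>\<^bsub>S\<^esub> b = \<zero>\<^bsub>S\<^esub>"
    using b by (simp add: End_ring_mult_eq_zero_iff End_ring_mult_apply End_ring_simps(1) endo_closed)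
qed

lemma symmetric_mod_imp_reversible_ring:
  assumes "symmetric_mod R M act" shows "reversible_ring S"
  using assms unfolding reversible_ring_def symmetric_mod_def
  by (simp add: End_ring_mult_eq_zero_iff End_ring_simps(1))

end

locale internal_direct_sum = right_mod +
  fixes K N :: "'c set"
  assumes submod_K: "submod R M act K" and submod_N: "submod R M act N"
    and trivial_intersection: "K \<inter> N = {\<zero>\<^bsub>M\<^esub>}"
    and decomposition: "m \<in> carrier M \<Longrightarrow> \<exists>k\<in>K. \<exists>b\<in>N. m = k \<oplus>\<^bsub>M\<^esub> b"
begin

lemma K_closed: "K \<subseteq> carrier M" "\<zero>\<^bsub>M\<^esub> \<in> K"
    "k \<in> K \<Longrightarrow> k' \<in> K \<Longrightarrow> k \<oplus>\<^bsub>M\<^esub> k' \<in> K" "k \<in> K \<Longrightarrow> \<ominus>\<^bsub>M\<^esub> k \<in> K"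
    "k \<in> K \<Longrightarrow> r \<in> carrier R \<Longrightarrow> act k r \<in> K"
  using submod_K unfolding submod_def by blast+

lemma N_closed: "N \<subseteq> carrier M" "\<zero>\<^bsub>M\<^esub> \<in> N"
    "b \<in> N \<Longrightarrow> b' \<in> N \<Longrightarrow> b \<oplus>\<^bsub>M\<^esub> b' \<in> N" "b \<in> N \<Longrightarrow> \<ominus>\<^bsub>M\<^esub> b \<in> N"
    "b \<in> N \<Longrightarrow> r \<in> carrier R \<Longrightarrow> act b r \<in> N"
  using submod_N unfolding submod_def by blast+

lemma decomposition_unique:
  assumes k: "k \<in> K" "k' \<in> K" and b: "b \<in> N" "b' \<in> N" and eq: "k \<oplus>\<^bsub>M\<^esub> b = k' \<oplus>\<^bsub>M\<^esub> b'"
  shows "b = b'"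
proof -
  have carrier: "k \<in> carrier M" "k' \<in> carrier M" "b \<in> carrier M" "b' \<in> carrier M"
    using k b K_closed(1) N_closed(1) by blast+
  then have "k \<ominus>\<^bsub>M\<^esub> k' = b' \<ominus>\<^bsub>M\<^esub> b"
    using eq unfolding M.minus_eq
    by (smt (verit, best) M.add.inv_closed M.add.m_assoc M.add.m_closed M.add.m_comm M.r_neg2)
  moreover have "k \<ominus>\<^bsub>M\<^esub> k' \<in> K" "b' \<ominus>\<^bsub>M\<^esub> b \<in> N"
    using k b K_closed N_closed by (simp_all add: M.minus_eq)
  ultimately have "b' \<ominus>\<^bsub>M\<^esub> b = \<zero>\<^bsub>M\<^esub>" using trivial_intersection by auto
  then show "b = b'" using carrier by (metis M.minus_eq M.minus_equality M.minus_minus M.a_inv_closed)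
qed

definition projection :: "'c \<Rightarrow> 'c" where
  "projection = (\<lambda>m\<in>carrier M. THE b. b \<in> N \<and> (\<exists>k\<in>K. m = k \<oplus>\<^bsub>M\<^esub> b))"

lemma projection_sum: "k \<in> K \<Longrightarrow> b \<in> N \<Longrightarrow> projection (k \<oplus>\<^bsub>M\<^esub> b) = b"
  unfolding projection_def using K_closed(1) N_closed(1) decomposition_unique
  by (auto intro!: the_equality)

lemma projection_decomposition:
  assumes "m \<in> carrier M" shows "projection m \<in> N" "\<exists>k\<in>K. m = k \<oplus>\<^bsub>M\<^esub> projection m"
  using decomposition[OF assms] projection_sum by auto

lemma projection_closed: "m \<in> carrier M \<Longrightarrow> projection m \<in> carrier M"
  using projection_decomposition(1) N_closed(1) by blast

lemma projection_on_K: "k \<in> K \<Longrightarrow> projection k = \<zero>\<^bsub>M\<^esub>"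
  using projection_sum[of k "\<zero>\<^bsub>M\<^esub>"] K_closed(1) N_closed(2) by auto

lemma projection_on_N: "b \<in> N \<Longrightarrow> projection b = b"
  using projection_sum[of "\<zero>\<^bsub>M\<^esub>" b] K_closed(2) N_closed(1) by auto

lemma projection_endo: "projection \<in> endos R M act"
proof (rule endosI)
  show "projection \<in> extensional (carrier M)" unfolding projection_def by simp
  fix m assume m: "m \<in> carrier M"
  then obtain k where k: "k \<in> K" "m = k \<oplus>\<^bsub>M\<^esub> projection m"
    using projection_decomposition by blast
  have carrier: "k \<in> carrier M" "projection m \<in> carrier M"
    using k(1) K_closed(1) m projection_closed by blast+
  show "projection m \<in> carrier M" by (rule carrier(2))
  show "projection (m \<oplus>\<^bsub>M\<^esub> n) = projection m \<oplus>\<^bsub>M\<^esub> projection n" if n: "n \<in> carrier M" for n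
  proof -
    obtain k' where k': "k' \<in> K" "n = k' \<oplus>\<^bsub>M\<^esub> projection n"
      using n projection_decomposition by blast
    have "m \<oplus>\<^bsub>M\<^esub> n = (k \<oplus>\<^bsub>M\<^esub> projection m) \<oplus>\<^bsub>M\<^esub> (k' \<oplus>\<^bsub>M\<^esub> projection n)"
      using k k' by simp
    also have "\<dots> = (k \<oplus>\<^bsub>M\<^esub> k') \<oplus>\<^bsub>M\<^esub> (projection m \<oplus>\<^bsub>M\<^esub> projection n)"
      using carrier k'(1) K_closed(1) n projection_closed by (simp add: subsetD M.a_ac)
    finally show ?thesis
      using k k' m n projection_decomposition(1) K_closed(3) N_closed(3) projection_sum by simp
  qed
  show "projection (act m r) = act (projection m) r" if r: "r \<in> carrier R" for r
  proof -
    have "act m r = act k r \<oplus>\<^bsub>M\<^esub> act (projection m) r"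
      using k(2) carrier r act_add by metis
    then show ?thesis
      using k m r projection_decomposition(1) K_closed(5) N_closed(5) projection_sum by simp
  qed
qed

lemma projection_idempotent: "projection \<otimes>\<^bsub>S\<^esub> projection = projection"
  using projection_endo S.m_closed
  by (intro endo_eqI) (auto simp: End_ring_simps(1) End_ring_mult_apply projection_on_N
      projection_decomposition(1))

end

context right_mod
begin

lemma direct_summand_projection:
  assumes "direct_summand R M act K"
  obtains p where "p \<in> carrier S" "p \<otimes>\<^bsub>S\<^esub> p = p" "\<And>k. k \<in> K \<Longrightarrow> p k = \<zero>\<^bsub>M\<^esub>"
    "\<And>m. m \<in> carrier M \<Longrightarrow> \<exists>k\<in>K. m = k \<oplus>\<^bsub>M\<^esub> p m"
proof -
  obtain N where "internal_direct_sum R M act K N"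
    using assms right_module unfolding direct_summand_def internal_direct_sum_def
      internal_direct_sum_axioms_def right_mod_def by blast
  then interpret internal_direct_sum R M act K N .
  show thesis
    using that projection_endo projection_idempotent projection_on_K projection_decomposition(2)
    unfolding End_ring_simps(1) by blast
qed

lemma rickart_idempotent_right_unit:
  assumes "rickart_mod R M act" and a: "a \<in> carrier S"
  obtains z where "z \<in> carrier S" "z \<otimes>\<^bsub>S\<^esub> z = z" "a \<otimes>\<^bsub>S\<^esub> z = a"
    "ker_endo M a \<subseteq> ker_endo M z"
proof -
  have "direct_summand R M act (ker_endo M a)"
    using assms unfolding rickart_mod_def End_ring_simps(1) by blast
  then obtain p where p: "p \<in> carrier S" "p \<otimes>\<^bsub>S\<^esub> p = p"
    and p_ker: "\<And>k. k \<in> ker_endo M a \<Longrightarrow> p k = \<zero>\<^bsub>M\<^esub>"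
    and decompose: "\<And>m. m \<in> carrier M \<Longrightarrow> \<exists>k\<in>ker_endo M a. m = k \<oplus>\<^bsub>M\<^esub> p m"
    by (rule direct_summand_projection) blast
  have "a \<otimes>\<^bsub>S\<^esub> p = a"
  proof (rule End_ring_eqI)
    fix m assume m: "m \<in> carrier M"
    then obtain k where k: "k \<in> ker_endo M a" "m = k \<oplus>\<^bsub>M\<^esub> p m" using decompose by blast
    have k_carrier: "k \<in> carrier M" and ak: "a k = \<zero>\<^bsub>M\<^esub>"
      using k(1) unfolding ker_endo_def by simp_all
    have pm: "p m \<in> carrier M" using p m by (simp add: End_ring_simps(1) endo_closed)
    have "a m = a (k \<oplus>\<^bsub>M\<^esub> p m)" using k(2) by (rule arg_cong)
    also have "\<dots> = a k \<oplus>\<^bsub>M\<^esub> a (p m)"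
      using a k_carrier pm by (simp add: End_ring_simps(1) endo_add)
    also have "\<dots> = a (p m)"
      using a pm ak by (simp add: End_ring_simps(1) endo_closed)
    finally show "(a \<otimes>\<^bsub>S\<^esub> p) m = a m" using m by (simp add: End_ring_mult_apply)
  qed (use a p in simp_all)
  moreover have "ker_endo M a \<subseteq> ker_endo M p"
    using p_ker unfolding ker_endo_def by blast
  ultimately show thesis using that p by blast
qed

lemma ideal_left_annihilator:
  assumes "fully_invariant R M act N" shows "ideal (left_annihilator R M act N) S"
proof -
  let ?I = "left_annihilator R M act N"
  have N: "N \<subseteq> carrier M" and invariant: "\<And>\<phi> n. \<phi> \<in> carrier S \<Longrightarrow> n \<in> N \<Longrightarrow> \<phi> n \<in> N"
    using assms unfolding fully_invariant_def submod_def End_ring_simps(1) by blast+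
  have I: "x \<in> ?I \<longleftrightarrow> x \<in> carrier S \<and> (\<forall>n\<in>N. x n = \<zero>\<^bsub>M\<^esub>)" for x
    unfolding left_annihilator_def End_ring_simps(1) by blast
  have left: "s \<otimes>\<^bsub>S\<^esub> x \<in> ?I" if "x \<in> ?I" "s \<in> carrier S" for x s
    using that N unfolding I by (auto simp: End_ring_mult_apply End_ring_apply_zero subsetD)
  have right: "x \<otimes>\<^bsub>S\<^esub> s \<in> ?I" if "x \<in> ?I" "s \<in> carrier S" for x s
    using that N invariant unfolding I by (auto simp: End_ring_mult_apply subsetD)
  have subgroup: "subgroup ?I (add_monoid S)"
  proof (rule S.add.subgroupI)
    show "?I \<subseteq> carrier S" using I by blast
    have "\<zero>\<^bsub>S\<^esub> \<in> ?I"
      using N S.zero_closed unfolding I End_ring_simps(4) by auto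
    then show "?I \<noteq> {}" by blast
    fix x y assume x: "x \<in> ?I" and y: "y \<in> ?I"
    then show "\<ominus>\<^bsub>S\<^esub> x \<in> ?I"
      using left[of x "\<ominus>\<^bsub>S\<^esub> \<one>\<^bsub>S\<^esub>"] unfolding I by (simp add: S.l_minus)
    have "x \<oplus>\<^bsub>S\<^esub> y \<in> carrier S" using x y unfolding I by simp
    then show "x \<oplus>\<^bsub>S\<^esub> y \<in> ?I"
      using x y N unfolding I End_ring_simps(5) by (auto simp: subsetD)
  qed
  show ?thesis by (rule idealI[OF ring_End_ring subgroup left right])
qed

lemma rickart_abelian_imp_centrally_endo_AIP:
  assumes rickart: "rickart_mod R M act" and abelian: "abelian_ring S"
  shows "centrally_endo_AIP R M act"
  unfolding centrally_endo_AIP_def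
proof (intro allI impI)
  fix N assume N: "fully_invariant R M act N"
  let ?I = "left_annihilator R M act N"
  show "centrally_s_unital S ?I"
    unfolding centrally_s_unital_def
  proof (intro conjI ballI)
    show "ideal ?I S" using N by (rule ideal_left_annihilator)
    fix a assume a: "a \<in> ?I"
    have aS: "a \<in> carrier S" and N_ker: "N \<subseteq> ker_endo M a"
      using a N unfolding left_annihilator_def fully_invariant_def submod_def ker_endo_def
        End_ring_simps(1) by blast+
    obtain z where z: "z \<in> carrier S" "z \<otimes>\<^bsub>S\<^esub> z = z" "a \<otimes>\<^bsub>S\<^esub> z = a"
      and "ker_endo M a \<subseteq> ker_endo M z"
      using rickart aS by (rule rickart_idempotent_right_unit)
    then have "z \<in> ?I"
      using N_ker unfolding left_annihilator_def ker_endo_def End_ring_simps(1) by blast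
    moreover have "\<forall>s\<in>carrier S. z \<otimes>\<^bsub>S\<^esub> s = s \<otimes>\<^bsub>S\<^esub> z"
      using abelian z unfolding abelian_ring_def by blast
    ultimately show "\<exists>z\<in>?I. (\<forall>s\<in>carrier S. z \<otimes>\<^bsub>S\<^esub> s = s \<otimes>\<^bsub>S\<^esub> z) \<and> a \<otimes>\<^bsub>S\<^esub> z = a"
      using z by blast
  qed
qed

end

theorem corollary2p3:
  fixes R :: "('a, 'b) ring_scheme" and M :: "('c, 'd) ring_scheme" and act :: "'c \<Rightarrow> 'a \<Rightarrow> 'c"
  assumes "right_module R M act"
    and "rickart_mod R M act"
    and "reduced_mod R M act \<or> rigid_mod R M act \<or> abelian_mod R M act \<or>
         semicommutative_mod R M act \<or> symmetric_mod R M act"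
  shows "centrally_endo_AIP R M act"
proof -
  interpret right_mod R M act by (rule right_mod.intro) (rule assms(1))
  have "abelian_ring (End_ring R M act)"
    using assms(3) reduced_mod_imp_rigid_mod rigid_mod_imp_reduced_ring
      semicommutative_mod_imp_semicommutative_ring symmetric_mod_imp_reversible_ring
      abelian_mod_iff_abelian_ring S.reduced_ring_imp_reversible
      S.reversible_ring_imp_semicommutative S.semicommutative_ring_imp_abelian
    by blast
  then show ?thesis by (rule rickart_abelian_imp_centrally_endo_AIP[OF assms(2)])
qed

end
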